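(* Let $\mathbb{H}$ be a finite-dimensional complex Hilbert space with $\dim\mathbb{H}\ge2$, let $k,n$ be positive integers, let $\alpha,\beta$ be complex numbers with $|\alpha|^2+|\beta|^2=1$ and $|\beta|\neq1$, and let $|\Phi\rangle\in\mathbb{H}^{\otimes n}$ be a fixed unit vector (independent of the input state; known or unknown). For a pure state $\rho_\psi$ on $\mathbb{H}$ let $|\Psi\rangle\propto\alpha|\psi\rangle^{\otimes n}+\beta|\Phi\rangle$. Then: (i) if $0<|\beta|<1$, there is no probabilistic quantum transformation $\mathcal{F}$ from $\mathbb{H}^{\otimes k}$ to $\mathbb{H}^{\otimes n}$ with $\mathcal{F}(\rho_\psi^{\otimes k})=\rho_\Psi$ for all pure states $\rho_\psi$ on $\mathbb{H}$; (ii) if $\beta=0$ and $n>k$, there is no probabilistic quantum transformation $\mathcal{F}$ from $\mathbb{H}^{\otimes k}$ to $\mathbb{H}^{\otimes n}$ with $\mathcal{F}(\rho_\psi^{\otimes k})=\rho_\psi^{\otimes n}$ for all pure states $\rho_\psi$; (iii) if $\beta=0$ and $n<k$, there is no unitary $U$ on $\mathbb{H}^{\otimes k}$ with $U\rho_\psi^{\otimes k}U^\dagger=\rho_\psi^{\otimes n}\otimes\rho_0^{\otimes(k-n)}$ for all pure states $\rho_\psi$, where $|0\rangle\in\mathbb{H}$ is a fixed unit vector.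
   Context: For a unit vector $|\psi\rangle$, $\rho_\psi=|\psi\rangle\langle\psi|$; $|\Psi\rangle\propto|\chi\rangle$ means $|\Psi\rangle$ is the normalization of $|\chi\rangle$ up to a global phase. A probabilistic quantum transformation from $\mathbb{H}_1$ to $\mathbb{H}_2$ is a completely positive, trace-non-increasing linear map from operators on $\mathbb{H}_1$ to operators on $\mathbb{H}_2$; $\mathcal{F}(\rho)=\sigma$ for pure states means $\mathcal{F}(\rho)=p\sigma$ for some $p>0$. *)

theory Defs
  imports Complex_Main
begin

text \<open>A vector of a space with
orthonormal basis indexed by a finite set I is a function I -> complex (values
outside I are irrelevant); an operator is a kernel I -> I -> complex.\<close>

definition inner_on :: "'a set \<Rightarrow> ('a \<Rightarrow> complex) \<Rightarrow> ('a \<Rightarrow> complex) \<Rightarrow> complex" where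
  "inner_on I v w = (\<Sum>i\<in>I. cnj (v i) * w i)"

definition apply_op :: "'a set \<Rightarrow> ('a \<Rightarrow> 'a \<Rightarrow> complex) \<Rightarrow> ('a \<Rightarrow> complex) \<Rightarrow> ('a \<Rightarrow> complex)" where
  "apply_op I A v = (\<lambda>i. \<Sum>j\<in>I. A i j * v j)"

definition positive_op :: "'a set \<Rightarrow> ('a \<Rightarrow> 'a \<Rightarrow> complex) \<Rightarrow> bool" where
  "positive_op I A = (\<forall>v. inner_on I v (apply_op I A v) \<in> \<real> \<and>
                          0 \<le> Re (inner_on I v (apply_op I A v)))"

definition trace_on :: "'a set \<Rightarrow> ('a \<Rightarrow> 'a \<Rightarrow> complex) \<Rightarrow> complex" where
  "trace_on I A = (\<Sum>i\<in>I. A i i)"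

definition outer :: "('a \<Rightarrow> complex) \<Rightarrow> ('a \<Rightarrow> complex) \<Rightarrow> ('a \<Rightarrow> 'a \<Rightarrow> complex)" where
  "outer v w = (\<lambda>i j. v i * cnj (w j))"

definition unit_vec :: "'a set \<Rightarrow> ('a \<Rightarrow> complex) \<Rightarrow> bool" where
  "unit_vec I v = (inner_on I v v = 1)"

definition ops_eq_on :: "'a set \<Rightarrow> ('a \<Rightarrow> 'a \<Rightarrow> complex) \<Rightarrow> ('a \<Rightarrow> 'a \<Rightarrow> complex) \<Rightarrow> bool" where
  "ops_eq_on I A B = (\<forall>i\<in>I. \<forall>j\<in>I. A i j = B i j)"

text \<open>A linear map from operators on I1 to operators on I2, given by its coefficients:
  (lin_map I1 c A) a b = sum over i j in I1 of c a b i j * A i j.  Every linear map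
  between these finite-dimensional operator spaces has exactly one such representation.\<close>
definition lin_map :: "'a set \<Rightarrow> ('b \<Rightarrow> 'b \<Rightarrow> 'a \<Rightarrow> 'a \<Rightarrow> complex) \<Rightarrow>
    ('a \<Rightarrow> 'a \<Rightarrow> complex) \<Rightarrow> ('b \<Rightarrow> 'b \<Rightarrow> complex)" where
  "lin_map I1 c A = (\<lambda>a b. \<Sum>i\<in>I1. \<Sum>j\<in>I1. c a b i j * A i j)"

text \<open>The map id_m (x) F acting on operators on C^m (x) H1 (index set {..<m} x I1).\<close>
definition ext_map :: "nat \<Rightarrow> 'a set \<Rightarrow> ('b \<Rightarrow> 'b \<Rightarrow> 'a \<Rightarrow> 'a \<Rightarrow> complex) \<Rightarrow>
    (nat \<times> 'a \<Rightarrow> nat \<times> 'a \<Rightarrow> complex) \<Rightarrow> (nat \<times> 'b \<Rightarrow> nat \<times> 'b \<Rightarrow> complex)" where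
  "ext_map m I1 c X = (\<lambda>(p, a) (q, b). \<Sum>i\<in>I1. \<Sum>j\<in>I1. c a b i j * X (p, i) (q, j))"

definition completely_positive ::
    "'a set \<Rightarrow> 'b set \<Rightarrow> ('b \<Rightarrow> 'b \<Rightarrow> 'a \<Rightarrow> 'a \<Rightarrow> complex) \<Rightarrow> bool" where
  "completely_positive I1 I2 c =
     (\<forall>m::nat. \<forall>X. positive_op ({..<m} \<times> I1) X \<longrightarrow>
                  positive_op ({..<m} \<times> I2) (ext_map m I1 c X))"

definition trace_nonincreasing ::
    "'a set \<Rightarrow> 'b set \<Rightarrow> ('b \<Rightarrow> 'b \<Rightarrow> 'a \<Rightarrow> 'a \<Rightarrow> complex) \<Rightarrow> bool" where
  "trace_nonincreasing I1 I2 c =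
     (\<forall>\<rho>. positive_op I1 \<rho> \<longrightarrow> Re (trace_on I2 (lin_map I1 c \<rho>)) \<le> Re (trace_on I1 \<rho>))"

definition prob_transformation ::
    "'a set \<Rightarrow> 'b set \<Rightarrow> ('b \<Rightarrow> 'b \<Rightarrow> 'a \<Rightarrow> 'a \<Rightarrow> complex) \<Rightarrow> bool" where
  "prob_transformation I1 I2 c = (completely_positive I1 I2 c \<and> trace_nonincreasing I1 I2 c)"

text \<open>Tensor powers.  H = C^'d (basis indexed by the finite type 'd); H^(tensor n) has
  basis indexed by lists over 'd of length n.\<close>
definition tidx :: "nat \<Rightarrow> 'd list set" where
  "tidx n = {xs. length xs = n}"

definition vec_tpow :: "('d \<Rightarrow> complex) \<Rightarrow> ('d list \<Rightarrow> complex)" where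
  "vec_tpow v = (\<lambda>xs. prod_list (map v xs))"

definition op_tpow :: "('d \<Rightarrow> 'd \<Rightarrow> complex) \<Rightarrow> ('d list \<Rightarrow> 'd list \<Rightarrow> complex)" where
  "op_tpow A = (\<lambda>xs ys. prod_list (map (\<lambda>(x, y). A x y) (zip xs ys)))"

text \<open>A (x) B for A on H^(tensor n) and B on H^(tensor m), as operator on H^(tensor (n+m)).\<close>
definition op_tensor :: "nat \<Rightarrow> ('d list \<Rightarrow> 'd list \<Rightarrow> complex) \<Rightarrow>
    ('d list \<Rightarrow> 'd list \<Rightarrow> complex) \<Rightarrow> ('d list \<Rightarrow> 'd list \<Rightarrow> complex)" where
  "op_tensor n A B = (\<lambda>xs ys. A (take n xs) (take n ys) * B (drop n xs) (drop n ys))"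

definition proj_norm :: "'a set \<Rightarrow> ('a \<Rightarrow> complex) \<Rightarrow> ('a \<Rightarrow> 'a \<Rightarrow> complex)" where
  "proj_norm I v = (\<lambda>i j. outer v v i j / inner_on I v v)"

definition unitary_on :: "'a set \<Rightarrow> ('a \<Rightarrow> 'a \<Rightarrow> complex) \<Rightarrow> bool" where
  "unitary_on I U = (\<forall>i\<in>I. \<forall>j\<in>I. (\<Sum>l\<in>I. cnj (U l i) * U l j) = (if i = j then 1 else 0))"

definition conj_op :: "'a set \<Rightarrow> ('a \<Rightarrow> 'a \<Rightarrow> complex) \<Rightarrow> ('a \<Rightarrow> 'a \<Rightarrow> complex) \<Rightarrow>
    ('a \<Rightarrow> 'a \<Rightarrow> complex)" where
  "conj_op I U A = (\<lambda>a b. \<Sum>i\<in>I. \<Sum>j\<in>I. U a i * A i j * cnj (U b j))"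

end

theory Submission
  imports Defs "HOL-Computational_Algebra.Polynomial"
begin

text \<open>
(i) The operator \<open>\<rho>\<^sub>\<psi>\<close> forgets the global phase of \<open>\<psi>\<close>, but the target state does not:
replacing \<open>\<psi>\<close> by \<open>e\<^sup>i\<^sup>\<pi>\<^sup>/\<^sup>n \<psi>\<close> flips the sign of \<open>\<alpha> \<psi>\<^sup>\<otimes>\<^sup>n\<close> and leaves \<open>\<beta> \<Phi>\<close> alone.
Comparing the two proportional outputs at an entry where only \<open>\<Phi>\<close> contributes and at the entry
\<open>a\<dots>a\<close> forces \<open>\<alpha> = 0\<close>, which |\<beta>| \<noteq> 1 excludes.

(ii) Along the curve \<open>\<psi>\<^sub>x \<propto> |a\<rangle> + x |b\<rangle>\<close>, x real, the entries of the linear image of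
\<open>\<rho>\<^sub>\<psi>\<^sup>\<otimes>\<^sup>k\<close> are, once the normalisation is cleared, polynomials in x of degree at most 2k,
whereas the diagonal entries of \<open>\<rho>\<^sub>\<psi>\<^sup>\<otimes>\<^sup>n\<close> at \<open>b\<dots>b\<close> and \<open>a\<dots>a\<close> have ratio \<open>x\<^sup>2\<^sup>n\<close>.
Comparing degrees gives n \<le> k.

(iii) Conjugation by a unitary preserves Tr(AB), which is \<open>|\<langle>\<psi>|\<phi>\<rangle>|\<^sup>2\<^sup>k\<close> on the inputs and
\<open>|\<langle>\<psi>|\<phi>\<rangle>|\<^sup>2\<^sup>n\<close> on the outputs; an overlap of 3/5 separates the two.

Only (ii) uses linearity of the transformation.
\<close>

section \<open>Vectors and tensor powers\<close>

lemma finite_tidx: "finite (tidx k :: 'd::finite list set)"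
proof -
  have "tidx k = {xs::'d list. set xs \<subseteq> UNIV \<and> length xs = k}" by (auto simp: tidx_def)
  thus ?thesis using finite_lists_length_eq[OF finite_UNIV] by simp
qed

lemma sum_tidx_prod_list:
  fixes f :: "'d::finite \<Rightarrow> 'a::comm_semiring_1"
  shows "(\<Sum>xs\<in>tidx k. prod_list (map f xs)) = (\<Sum>x\<in>(UNIV::'d::finite set). f x) ^ k"
proof (induction k)
  case 0
  have "tidx 0 = {[] :: 'd list}" by (auto simp: tidx_def)
  then show ?case by simp
next
  case (Suc k)
  have tidx_Suc: "tidx (Suc k) = (\<lambda>(x, xs). x # xs) ` (UNIV \<times> tidx k)"
    unfolding tidx_def by (auto simp: image_iff length_Suc_conv)
  have inj: "inj_on (\<lambda>(x, xs). x # xs) (UNIV \<times> (tidx k :: 'd list set))"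
    by (auto simp: inj_on_def)
  have "(\<Sum>xs\<in>tidx (Suc k). prod_list (map f xs)) = (\<Sum>x\<in>UNIV. \<Sum>xs\<in>tidx k. f x * prod_list (map f xs))"
    unfolding tidx_Suc sum.reindex[OF inj] sum.cartesian_product by (rule sum.cong) auto
  also have "\<dots> = (\<Sum>x\<in>UNIV. f x) * (\<Sum>xs\<in>tidx k. prod_list (map f xs))"
    by (simp add: sum_product)
  finally show ?case using Suc by simp
qed

lemma tidx_add_eq_image:
  "tidx (m + l) = (\<lambda>(ys, zs). ys @ zs) ` (tidx m \<times> tidx l)" (is "_ = ?image")
proof (intro equalityI subsetI)
  fix xs :: "'a list" assume "xs \<in> tidx (m + l)"
  then show "xs \<in> ?image"
    by (intro image_eqI[of _ _ "(take m xs, drop m xs)"]) (auto simp: tidx_def)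
qed (auto simp: tidx_def)

lemma sum_tidx_add:
  "(\<Sum>xs\<in>tidx (m + l). h (take m xs) (drop m xs)) = (\<Sum>ys\<in>tidx m. \<Sum>zs\<in>tidx l. h ys zs)"
proof -
  have inj: "inj_on (\<lambda>(ys, zs). ys @ zs) (tidx m \<times> tidx l)"
    by (auto simp: inj_on_def tidx_def)
  have "(\<Sum>xs\<in>tidx (m + l). h (take m xs) (drop m xs)) = (\<Sum>(ys, zs)\<in>tidx m \<times> tidx l. h ys zs)"
    unfolding tidx_add_eq_image sum.reindex[OF inj] by (rule sum.cong) (auto simp: tidx_def)
  then show ?thesis by (simp add: sum.cartesian_product)
qed

lemma obtain_two_distinct:
  assumes "card (UNIV :: 'a set) \<ge> 2"
  obtains a b :: "'a::finite" where "a \<noteq> b"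
  using assms by (metis (full_types) card_le_Suc0_iff_eq finite not_less_eq_eq numeral_2_eq_2)

lemma sum_UNIV_two_support:
  fixes g :: "'a::finite \<Rightarrow> 'b::comm_monoid_add"
  assumes "a \<noteq> b" "\<And>x. x \<noteq> a \<Longrightarrow> x \<noteq> b \<Longrightarrow> g x = 0"
  shows "(\<Sum>x\<in>UNIV. g x) = g a + g b"
proof -
  have "(\<Sum>x\<in>UNIV. g x) = (\<Sum>x\<in>{a, b}. g x)"
    by (rule sum.mono_neutral_right) (use assms in auto)
  then show ?thesis using assms(1) by simp
qed

lemma inner_on_scale: "inner_on I (\<lambda>i. c * v i) (\<lambda>i. d * w i) = cnj c * d * inner_on I v w"
  by (simp add: inner_on_def sum_distrib_left mult_ac)

lemma inner_on_self: "inner_on I v v = of_real (\<Sum>i\<in>I. (cmod (v i))\<^sup>2)"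
  unfolding inner_on_def of_real_sum
  by (rule sum.cong[OF refl]) (metis complex_norm_square mult.commute)

lemma inner_on_self_nonzero:
  assumes "finite I" "i \<in> I" "v i \<noteq> 0"
  shows "inner_on I v v \<noteq> 0"
proof -
  have "0 < (cmod (v i))\<^sup>2" using assms(3) by simp
  also have "\<dots> \<le> (\<Sum>j\<in>I. (cmod (v j))\<^sup>2)" using assms(1,2) by (intro member_le_sum) auto
  finally show ?thesis unfolding inner_on_self by (simp del: of_real_sum)
qed

lemma unit_vec_nonzero_entry: "unit_vec I v \<Longrightarrow> \<exists>i\<in>I. v i \<noteq> 0"
  unfolding unit_vec_def inner_on_def by (metis (no_types) mult_zero_right sum.neutral zero_neq_one)

definition basis_vec :: "'d \<Rightarrow> 'd \<Rightarrow> complex" where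
  "basis_vec a = (\<lambda>x. if x = a then 1 else 0)"

lemma inner_on_basis_vec_left: "inner_on UNIV (basis_vec a) v = v (a :: 'd::finite)"
proof -
  have "inner_on UNIV (basis_vec a) v = (\<Sum>x\<in>UNIV. if x = a then v x else 0)"
    unfolding inner_on_def by (rule sum.cong) (auto simp: basis_vec_def)
  then show ?thesis by simp
qed

lemma inner_on_basis_vec_right: "inner_on UNIV v (basis_vec a) = cnj (v (a :: 'd::finite))"
proof -
  have "inner_on UNIV v (basis_vec a) = (\<Sum>x\<in>UNIV. if x = a then cnj (v x) else 0)"
    unfolding inner_on_def by (rule sum.cong) (auto simp: basis_vec_def)
  then show ?thesis by simp
qed

lemma unit_vec_basis_vec: "unit_vec UNIV (basis_vec (a :: 'd::finite))"
  unfolding unit_vec_def inner_on_basis_vec_left by (simp add: basis_vec_def)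

lemma vec_tpow_scale: "vec_tpow (\<lambda>d. c * v d) xs = c ^ length xs * vec_tpow v xs"
  by (induction xs) (auto simp: vec_tpow_def)

lemma vec_tpow_basis_vec:
  "vec_tpow (basis_vec a) xs = (if xs = replicate (length xs) a then 1 else 0)"
  by (induction xs) (auto simp: vec_tpow_def basis_vec_def)

lemma op_tpow_replicate: "op_tpow A (replicate n a) (replicate n b) = A a b ^ n"
  by (simp add: op_tpow_def)

lemma op_tpow_outer:
  "length xs = length ys \<Longrightarrow> op_tpow (outer v w) xs ys = outer (vec_tpow v) (vec_tpow w) xs ys"
proof (induction xs arbitrary: ys)
  case Nil then show ?case by (simp add: op_tpow_def vec_tpow_def outer_def)
next
  case (Cons x xs) then show ?case
    by (cases ys) (auto simp: op_tpow_def vec_tpow_def outer_def)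
qed

lemma op_tpow_outer_scale:
  "length xs = length ys \<Longrightarrow>
   op_tpow (outer (\<lambda>d. c * v d) (\<lambda>d. c * v d)) xs ys = (cnj c * c) ^ length xs * op_tpow (outer v v) xs ys"
  by (simp add: op_tpow_outer) (simp add: outer_def vec_tpow_scale power_mult_distrib mult_ac)

lemma inner_on_vec_tpow:
  "inner_on (tidx k) (vec_tpow v) (vec_tpow w) = inner_on UNIV v (w :: 'd::finite \<Rightarrow> complex) ^ k"
proof -
  have "cnj (vec_tpow v xs) * vec_tpow w xs = prod_list (map (\<lambda>x. cnj (v x) * w x) xs)" for xs
    by (induction xs) (auto simp: vec_tpow_def)
  then show ?thesis by (simp add: inner_on_def sum_tidx_prod_list)
qed

section \<open>Phase sensitivity of superpositions\<close>

lemma outer_phase: "cnj \<omega> * \<omega> = 1 \<Longrightarrow> outer (\<lambda>x. \<omega> * v x) (\<lambda>x. \<omega> * v x) = outer v v"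
  by (simp add: outer_def fun_eq_iff mult_ac)

lemma outer_scaled_eq_imp_eq:
  assumes eq: "\<And>i j. i \<in> I \<Longrightarrow> j \<in> I \<Longrightarrow> c * outer u u i j = d * outer v v i j"
    and "c \<noteq> 0" "i0 \<in> I" "u i0 = v i0" "u i0 \<noteq> 0" "i \<in> I"
  shows "u i = v i"
proof -
  let ?w = "u i0"
  have "c * (?w * cnj ?w) = d * (?w * cnj ?w)"
    using eq[of i0 i0] assms(3,4) by (simp add: outer_def)
  then have "c = d" using assms(5) by simp
  moreover have "c * (u i * cnj ?w) = d * (v i * cnj ?w)"
    using eq[of i i0] assms(3,4,6) by (simp add: outer_def)
  ultimately show ?thesis using assms(2,5) by simp
qed

lemma proj_norm_scaled_eq_imp_eq:
  assumes "ops_eq_on I (\<lambda>i j. of_real p * proj_norm I u i j) (\<lambda>i j. of_real q * proj_norm I v i j)"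
    and "p > 0" "inner_on I u u \<noteq> 0" "i0 \<in> I" "u i0 = v i0" "u i0 \<noteq> 0" "i \<in> I"
  shows "u i = v i"
proof (rule outer_scaled_eq_imp_eq[where c = "of_real p / inner_on I u u"
      and d = "of_real q / inner_on I v v" and u = u and v = v, OF _ _ assms(4-7)])
  show "of_real p / inner_on I u u \<noteq> 0" using assms(2,3) by simp
  show "of_real p / inner_on I u u * outer u u i j = of_real q / inner_on I v v * outer v v i j"
    if "i \<in> I" "j \<in> I" for i j
    using assms(1) that by (simp add: ops_eq_on_def proj_norm_def)
qed

lemma no_map_to_phase_sensitive_superposition:
  fixes \<Phi> :: "'d::finite list \<Rightarrow> complex"
  assumes dim: "card (UNIV :: 'd set) \<ge> 2" and n: "n > 0" and Phi: "unit_vec (tidx n) \<Phi>"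
    and \<alpha>: "\<alpha> \<noteq> 0" and \<beta>: "\<beta> \<noteq> 0"
  shows "\<not> (\<forall>\<psi> :: 'd \<Rightarrow> complex. unit_vec UNIV \<psi> \<longrightarrow>
             (let \<chi> = (\<lambda>xs. \<alpha> * vec_tpow \<psi> xs + \<beta> * \<Phi> xs) in
              inner_on (tidx n) \<chi> \<chi> \<noteq> 0 \<longrightarrow>
              (\<exists>p::real. p > 0 \<and>
                 ops_eq_on (tidx n) (lin_map (tidx k) F (op_tpow (outer \<psi> \<psi>)))
                   (\<lambda>i j. of_real p * proj_norm (tidx n) \<chi> i j))))"
    (is "\<not> (\<forall>\<psi>. ?covariant \<psi>)")
proof
  assume covariant: "\<forall>\<psi>. ?covariant \<psi>"
  obtain xs0 where xs0: "xs0 \<in> tidx n" "\<Phi> xs0 \<noteq> 0"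
    using unit_vec_nonzero_entry[OF Phi] by blast
  obtain a :: 'd where a: "xs0 \<noteq> replicate n a"
  proof -
    obtain b c :: 'd where "b \<noteq> c" using obtain_two_distinct[OF dim] .
    then have "replicate n b \<noteq> replicate n c" using n by simp
    then show ?thesis using that by metis
  qed
  define \<psi> where "\<psi> = (\<lambda>c x. c * basis_vec a x)"
  define \<chi> where "\<chi> = (\<lambda>c xs. \<alpha> * vec_tpow (\<psi> c) xs + \<beta> * \<Phi> xs)"
  define \<omega> where "\<omega> = cis (pi / n)"
  have \<omega>: "cnj \<omega> * \<omega> = 1" "\<omega> ^ n = -1"
    using n by (simp_all add: \<omega>_def cis_cnj cis_mult DeMoivre)
  have \<chi>_xs0: "\<chi> c xs0 = \<beta> * \<Phi> xs0" for c
    using xs0(1) a by (simp add: \<chi>_def \<psi>_def vec_tpow_scale vec_tpow_basis_vec tidx_def)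
  have \<chi>_replicate: "\<chi> c (replicate n a) = \<alpha> * c ^ n + \<beta> * \<Phi> (replicate n a)" for c
    by (simp add: \<chi>_def \<psi>_def vec_tpow_scale vec_tpow_basis_vec)
  have \<chi>_nonzero: "inner_on (tidx n) (\<chi> c) (\<chi> c) \<noteq> 0" for c
    using inner_on_self_nonzero[OF finite_tidx xs0(1)] \<chi>_xs0 xs0(2) \<beta> by simp
  have covariant_at: "\<exists>p::real. p > 0 \<and> ops_eq_on (tidx n)
      (lin_map (tidx k) F (op_tpow (outer (basis_vec a) (basis_vec a))))
      (\<lambda>i j. of_real p * proj_norm (tidx n) (\<chi> c) i j)" if "cnj c * c = 1" for c
  proof -
    have "unit_vec UNIV (\<psi> c)"
      using unit_vec_basis_vec[of a] that by (simp add: unit_vec_def \<psi>_def inner_on_scale)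
    moreover have "?covariant (\<psi> c)" using covariant by blast
    ultimately show ?thesis
      using \<chi>_nonzero[of c] that by (simp add: Let_def \<chi>_def \<psi>_def outer_phase)
  qed
  obtain p where p: "p > 0" "ops_eq_on (tidx n)
      (lin_map (tidx k) F (op_tpow (outer (basis_vec a) (basis_vec a))))
      (\<lambda>i j. of_real p * proj_norm (tidx n) (\<chi> 1) i j)"
    using covariant_at[of 1] by auto
  obtain q where "ops_eq_on (tidx n)
      (lin_map (tidx k) F (op_tpow (outer (basis_vec a) (basis_vec a))))
      (\<lambda>i j. of_real q * proj_norm (tidx n) (\<chi> \<omega>) i j)"
    using covariant_at[OF \<omega>(1)] by auto
  with p(2) have "ops_eq_on (tidx n) (\<lambda>i j. of_real p * proj_norm (tidx n) (\<chi> 1) i j)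
                                     (\<lambda>i j. of_real q * proj_norm (tidx n) (\<chi> \<omega>) i j)"
    unfolding ops_eq_on_def by auto
  moreover have "\<chi> 1 xs0 = \<chi> \<omega> xs0" "\<chi> 1 xs0 \<noteq> 0" "replicate n a \<in> tidx n"
    using \<chi>_xs0 xs0(2) \<beta> by (simp_all add: tidx_def)
  ultimately have "\<chi> 1 (replicate n a) = \<chi> \<omega> (replicate n a)"
    by (rule proj_norm_scaled_eq_imp_eq[OF _ p(1) \<chi>_nonzero xs0(1)])
  then have "\<alpha> = \<alpha> * \<omega> ^ n" by (simp add: \<chi>_replicate)
  then show False using \<alpha> \<omega>(2) by simp
qed

section \<open>Linearity against polynomial degree\<close>

lemma lin_map_scale:
  "(\<And>i j. i \<in> I \<Longrightarrow> j \<in> I \<Longrightarrow> A i j = c * B i j) \<Longrightarrow>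
   lin_map I F A r s = c * lin_map I F B r s"
  unfolding lin_map_def by (simp add: sum_distrib_left mult_ac)

lemma tpow_covariant_rescale:
  fixes v :: "'d::finite \<Rightarrow> complex"
  assumes covariant: "\<forall>\<psi>. unit_vec UNIV \<psi> \<longrightarrow> (\<exists>p::real. p > 0 \<and>
      ops_eq_on (tidx n) (lin_map (tidx k) F (op_tpow (outer \<psi> \<psi>)))
        (\<lambda>i j. of_real p * op_tpow (outer \<psi> \<psi>) i j))"
    and v: "inner_on UNIV v v \<noteq> 0"
  obtains p :: real where "p > 0" "ops_eq_on (tidx n) (lin_map (tidx k) F (op_tpow (outer v v)))
      (\<lambda>i j. of_real p * op_tpow (outer v v) i j)"
proof -
  define N where "N = (\<Sum>x\<in>UNIV. (cmod (v x))\<^sup>2)"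
  have vN: "inner_on UNIV v v = of_real N" unfolding N_def by (rule inner_on_self)
  have "N \<ge> 0" unfolding N_def by (simp add: sum_nonneg)
  with v vN have N: "N > 0" by fastforce
  define c where "c = complex_of_real (1 / sqrt N)"
  have "cnj c * c = of_real ((1 / sqrt N)\<^sup>2)"
    by (simp only: c_def power2_eq_square complex_cnj_complex_of_real of_real_mult)
  moreover have "(1 / sqrt N)\<^sup>2 = 1 / N" using N by (simp add: power_divide)
  ultimately have cc: "cnj c * c = of_real (1 / N)" by simp
  have "unit_vec UNIV (\<lambda>d. c * v d)"
    using N by (simp add: unit_vec_def inner_on_scale cc vN)
  then obtain p :: real where p: "p > 0" and
    eq: "ops_eq_on (tidx n) (lin_map (tidx k) F (op_tpow (outer (\<lambda>d. c * v d) (\<lambda>d. c * v d))))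
          (\<lambda>i j. of_real p * op_tpow (outer (\<lambda>d. c * v d) (\<lambda>d. c * v d)) i j)"
    using covariant by blast
  have scale_in: "lin_map (tidx k) F (op_tpow (outer (\<lambda>d. c * v d) (\<lambda>d. c * v d))) i j =
      of_real (1 / N) ^ k * lin_map (tidx k) F (op_tpow (outer v v)) i j" for i j
    by (rule lin_map_scale) (simp add: op_tpow_outer_scale cc tidx_def)
  have scale_out: "op_tpow (outer (\<lambda>d. c * v d) (\<lambda>d. c * v d)) i j =
      of_real (1 / N) ^ n * op_tpow (outer v v) i j" if "i \<in> tidx n" "j \<in> tidx n" for i j
    using that by (simp add: op_tpow_outer_scale cc tidx_def)
  show thesis
  proof (rule that[of "p * N ^ k / N ^ n"])
    show "p * N ^ k / N ^ n > 0" using p N by simp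
    show "ops_eq_on (tidx n) (lin_map (tidx k) F (op_tpow (outer v v)))
        (\<lambda>i j. of_real (p * N ^ k / N ^ n) * op_tpow (outer v v) i j)"
      using eq N by (simp add: ops_eq_on_def scale_in scale_out field_simps)
  qed
qed

lemma tpow_covariant_diagonal_ratio:
  fixes v :: "'d::finite \<Rightarrow> complex"
  assumes covariant: "\<forall>\<psi>. unit_vec UNIV \<psi> \<longrightarrow> (\<exists>p::real. p > 0 \<and>
      ops_eq_on (tidx n) (lin_map (tidx k) F (op_tpow (outer \<psi> \<psi>)))
        (\<lambda>i j. of_real p * op_tpow (outer \<psi> \<psi>) i j))"
    and "v a = 1"
  shows "lin_map (tidx k) F (op_tpow (outer v v)) (replicate n b) (replicate n b) =
      lin_map (tidx k) F (op_tpow (outer v v)) (replicate n a) (replicate n a) * (v b * cnj (v b)) ^ n"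
    and "lin_map (tidx k) F (op_tpow (outer v v)) (replicate n a) (replicate n a) \<noteq> 0"
proof -
  have "inner_on UNIV v v \<noteq> 0" using \<open>v a = 1\<close> by (intro inner_on_self_nonzero[where i = a]) simp_all
  then obtain p :: real where "p > 0" and eq: "ops_eq_on (tidx n)
      (lin_map (tidx k) F (op_tpow (outer v v))) (\<lambda>i j. of_real p * op_tpow (outer v v) i j)"
    using tpow_covariant_rescale[OF covariant] by blast
  have diagonal: "lin_map (tidx k) F (op_tpow (outer v v)) (replicate n c) (replicate n c) =
      of_real p * (v c * cnj (v c)) ^ n" for c
    using eq by (simp add: ops_eq_on_def tidx_def op_tpow_replicate outer_def)
  show "lin_map (tidx k) F (op_tpow (outer v v)) (replicate n b) (replicate n b) =
      lin_map (tidx k) F (op_tpow (outer v v)) (replicate n a) (replicate n a) * (v b * cnj (v b)) ^ n"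
    "lin_map (tidx k) F (op_tpow (outer v v)) (replicate n a) (replicate n a) \<noteq> 0"
    using \<open>p > 0\<close> \<open>v a = 1\<close> by (simp_all add: diagonal)
qed

lemma degree_prod_list_map_le:
  assumes "\<And>x. degree (q x) \<le> 1"
  shows "degree (prod_list (map q xs)) \<le> length xs"
proof (induction xs)
  case (Cons x xs)
  have "degree (prod_list (map q (x # xs))) \<le> degree (q x) + degree (prod_list (map q xs))"
    by (simp add: degree_mult_le)
  also have "\<dots> \<le> 1 + length xs" using assms Cons.IH by (rule add_mono)
  finally show ?case by simp
qed simp

lemma lin_map_op_tpow_poly:
  fixes q :: "'d::finite \<Rightarrow> complex poly"
  assumes deg: "\<And>d. degree (q d) \<le> 1" and v: "\<And>x d. v x d = poly (q d) (of_real x)"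
  obtains P where "degree P \<le> 2 * k"
    "\<And>x::real. lin_map (tidx k) F (op_tpow (outer (v x) (v x))) r s = poly P (of_real x)"
proof
  define Q where "Q i j = prod_list (map q i) * map_poly cnj (prod_list (map q j))" for i j :: "'d list"
  show "degree (\<Sum>i\<in>tidx k. \<Sum>j\<in>tidx k. smult (F r s i j) (Q i j)) \<le> 2 * k"
  proof (intro degree_sum_le finite_tidx order.trans[OF degree_smult_le])
    fix i j :: "'d list" assume "i \<in> tidx k" "j \<in> tidx k"
    then show "degree (Q i j) \<le> 2 * k"
      using degree_mult_le[of "prod_list (map q i)" "map_poly cnj (prod_list (map q j))"]
        degree_prod_list_map_le[of q i, OF deg] degree_prod_list_map_le[of q j, OF deg]
      by (simp add: Q_def degree_map_poly tidx_def)
  qed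
  fix x :: real
  have "vec_tpow (v x) i = poly (prod_list (map q i)) (of_real x)" for i
    by (induction i) (auto simp: vec_tpow_def v)
  then have "op_tpow (outer (v x) (v x)) i j = poly (Q i j) (of_real x)"
    if "i \<in> tidx k" "j \<in> tidx k" for i j
    using that by (simp add: op_tpow_outer tidx_def) (simp add: outer_def Q_def)
  then show "lin_map (tidx k) F (op_tpow (outer (v x) (v x))) r s =
      poly (\<Sum>i\<in>tidx k. \<Sum>j\<in>tidx k. smult (F r s i j) (Q i j)) (of_real x)"
    by (simp add: lin_map_def poly_sum)
qed

lemma poly_eqI_on_reals:
  fixes p q :: "complex poly"
  assumes "\<And>x::real. poly p (of_real x) = poly q (of_real x)"
  shows "p = q"
proof (rule ccontr)
  assume "p \<noteq> q"
  then have "finite {z. poly (p - q) z = 0}" by (intro poly_roots_finite) simp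
  moreover have "range complex_of_real \<subseteq> {z. poly (p - q) z = 0}" using assms by auto
  ultimately have "finite (range complex_of_real)" by (rule finite_subset[rotated])
  then show False using finite_imageD[OF _ inj_of_real] infinite_UNIV_char_0 by blast
qed

lemma no_map_to_more_copies:
  assumes dim: "card (UNIV :: 'd::finite set) \<ge> 2" and kn: "k < n"
  shows "\<not> (\<forall>\<psi> :: 'd \<Rightarrow> complex. unit_vec UNIV \<psi> \<longrightarrow>
            (\<exists>p::real. p > 0 \<and>
               ops_eq_on (tidx n) (lin_map (tidx k) F (op_tpow (outer \<psi> \<psi>)))
                 (\<lambda>i j. of_real p * op_tpow (outer \<psi> \<psi>) i j)))"
proof
  assume covariant: "\<forall>\<psi> :: 'd \<Rightarrow> complex. unit_vec UNIV \<psi> \<longrightarrow>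
            (\<exists>p::real. p > 0 \<and>
               ops_eq_on (tidx n) (lin_map (tidx k) F (op_tpow (outer \<psi> \<psi>)))
                 (\<lambda>i j. of_real p * op_tpow (outer \<psi> \<psi>) i j))"
  obtain a b :: 'd where ab: "a \<noteq> b" using obtain_two_distinct[OF dim] .
  define q :: "'d \<Rightarrow> complex poly"
    where "q d = (if d = a then 1 else if d = b then [:0, 1:] else 0)" for d
  define v where "v x d = poly (q d) (of_real x)" for x :: real and d
  have v: "v x d = poly (q d) (of_real x)" for x d by (simp add: v_def)
  have deg: "degree (q d) \<le> 1" for d by (simp add: q_def)
  have v_a: "v x a = 1" and v_b: "v x b = of_real x" for x using ab by (simp_all add: v_def q_def)
  obtain Pa where Pa: "degree Pa \<le> 2 * k" "\<And>x. lin_map (tidx k) F (op_tpow (outer (v x) (v x)))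
      (replicate n a) (replicate n a) = poly Pa (of_real x)"
    using lin_map_op_tpow_poly[where v = v and F = F and r = "replicate n a" and s = "replicate n a", OF deg v]
    by blast
  obtain Pb where Pb: "degree Pb \<le> 2 * k" "\<And>x. lin_map (tidx k) F (op_tpow (outer (v x) (v x)))
      (replicate n b) (replicate n b) = poly Pb (of_real x)"
    using lin_map_op_tpow_poly[where v = v and F = F and r = "replicate n b" and s = "replicate n b", OF deg v]
    by blast
  have "Pb = Pa * monom 1 (2 * n)"
  proof (rule poly_eqI_on_reals)
    fix x :: real
    show "poly Pb (of_real x) = poly (Pa * monom 1 (2 * n)) (of_real x)"
      using tpow_covariant_diagonal_ratio(1)[where v = "v x" and a = a and b = b, OF covariant v_a]
      by (simp add: Pa Pb v_b poly_monom power_mult power2_eq_square)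
  qed
  moreover have "Pa \<noteq> 0"
    using tpow_covariant_diagonal_ratio(2)[where v = "v 0" and a = a, OF covariant v_a] Pa(2)[of 0] by auto
  ultimately have "degree Pb = degree Pa + 2 * n" by (simp add: degree_mult_eq degree_monom_eq)
  then show False using Pb(1) kn by simp
qed

section \<open>Unitary invariance of overlaps\<close>

definition op_mult :: "'a set \<Rightarrow> ('a \<Rightarrow> 'a \<Rightarrow> complex) \<Rightarrow> ('a \<Rightarrow> 'a \<Rightarrow> complex) \<Rightarrow>
    ('a \<Rightarrow> 'a \<Rightarrow> complex)" where
  "op_mult I A B = (\<lambda>i j. \<Sum>l\<in>I. A i l * B l j)"

definition adjoint :: "('a \<Rightarrow> 'a \<Rightarrow> complex) \<Rightarrow> ('a \<Rightarrow> 'a \<Rightarrow> complex)" where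
  "adjoint U = (\<lambda>i j. cnj (U j i))"

lemma op_mult_assoc: "finite I \<Longrightarrow> op_mult I (op_mult I A B) C = op_mult I A (op_mult I B C)"
  unfolding op_mult_def
  by (auto simp: fun_eq_iff sum_distrib_left sum_distrib_right mult.assoc intro: sum.swap)

lemma trace_op_mult_commute: "trace_on I (op_mult I A B) = trace_on I (op_mult I B A)"
  unfolding trace_on_def op_mult_def by (subst sum.swap) (simp add: mult.commute)

lemma trace_op_mult_cong:
  "(\<And>i j. i \<in> I \<Longrightarrow> j \<in> I \<Longrightarrow> A i j = A' i j) \<Longrightarrow>
   (\<And>i j. i \<in> I \<Longrightarrow> j \<in> I \<Longrightarrow> B i j = B' i j) \<Longrightarrow>
   trace_on I (op_mult I A B) = trace_on I (op_mult I A' B')"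
  unfolding trace_on_def op_mult_def by (intro sum.cong refl) auto

lemma conj_op_eq_op_mult: "conj_op I U A = op_mult I (op_mult I U A) (adjoint U)"
  unfolding conj_op_def op_mult_def adjoint_def
  by (auto simp: fun_eq_iff sum_distrib_right intro: sum.swap)

lemma op_mult_adjoint_unitary_cancel:
  assumes "finite I" "unitary_on I U" "i \<in> I"
  shows "op_mult I (adjoint U) (op_mult I U B) i j = B i j"
proof -
  have "op_mult I (adjoint U) (op_mult I U B) i j = (\<Sum>l\<in>I. (if i = l then 1 else 0) * B l j)"
    using assms unfolding op_mult_assoc[OF assms(1), symmetric]
    by (simp add: op_mult_def adjoint_def unitary_on_def)
  also have "\<dots> = (\<Sum>l\<in>I. if i = l then B l j else 0)" by (rule sum.cong) auto
  also have "\<dots> = B i j" using assms(1,3) by simp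
  finally show ?thesis .
qed

lemma op_mult_conj_op:
  assumes "finite I" "unitary_on I U"
  shows "op_mult I (conj_op I U A) (conj_op I U B) = conj_op I U (op_mult I A B)"
proof -
  have cancel: "op_mult I A (op_mult I (adjoint U) (op_mult I U C)) = op_mult I A C" for C
    using op_mult_adjoint_unitary_cancel[OF assms] by (simp add: op_mult_def)
  show ?thesis
    by (simp add: conj_op_eq_op_mult op_mult_assoc assms(1) cancel)
qed

lemma trace_conj_op:
  assumes "finite I" "unitary_on I U"
  shows "trace_on I (conj_op I U A) = trace_on I A"
proof -
  have "trace_on I (conj_op I U A) = trace_on I (op_mult I (adjoint U) (op_mult I U A))"
    unfolding conj_op_eq_op_mult by (rule trace_op_mult_commute)
  also have "\<dots> = trace_on I A"
    unfolding trace_on_def using op_mult_adjoint_unitary_cancel[OF assms] by simp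
  finally show ?thesis .
qed

lemma trace_outer_mult:
  "trace_on I (op_mult I (outer u u) (outer v v)) = inner_on I v u * inner_on I u v"
  unfolding trace_on_def op_mult_def outer_def inner_on_def sum_product
  by (rule sum.cong[OF refl], rule sum.cong[OF refl]) (simp add: mult_ac)

lemma trace_op_tpow_outer_mult:
  fixes \<psi> \<phi> :: "'d::finite \<Rightarrow> complex"
  shows "trace_on (tidx k) (op_mult (tidx k) (op_tpow (outer \<psi> \<psi>)) (op_tpow (outer \<phi> \<phi>))) =
    (inner_on UNIV \<phi> \<psi> * inner_on UNIV \<psi> \<phi>) ^ k"
proof -
  have "trace_on (tidx k) (op_mult (tidx k) (op_tpow (outer \<psi> \<psi>)) (op_tpow (outer \<phi> \<phi>))) =
      trace_on (tidx k) (op_mult (tidx k) (outer (vec_tpow \<psi>) (vec_tpow \<psi>))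
                                          (outer (vec_tpow \<phi>) (vec_tpow \<phi>)))"
    by (rule trace_op_mult_cong) (simp_all add: op_tpow_outer tidx_def)
  then show ?thesis by (simp add: trace_outer_mult inner_on_vec_tpow power_mult_distrib)
qed

lemma trace_op_tensor_mult:
  assumes "n \<le> k"
  shows "trace_on (tidx k) (op_mult (tidx k) (op_tensor n A B) (op_tensor n A' B')) =
    trace_on (tidx n) (op_mult (tidx n) A A') * trace_on (tidx (k - n)) (op_mult (tidx (k - n)) B B')"
proof -
  let ?m = "k - n"
  define f where "f x1 x2 y1 y2 = A x1 y1 * A' y1 x1 * (B x2 y2 * B' y2 x2)" for x1 x2 y1 y2
  have k: "tidx k = tidx (n + ?m)" using assms by simp
  have "trace_on (tidx k) (op_mult (tidx k) (op_tensor n A B) (op_tensor n A' B')) =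
      (\<Sum>xs\<in>tidx (n + ?m). \<Sum>ys\<in>tidx (n + ?m). f (take n xs) (drop n xs) (take n ys) (drop n ys))"
    unfolding trace_on_def op_mult_def op_tensor_def k f_def by (simp add: mult_ac)
  also have "\<dots> = (\<Sum>xs\<in>tidx (n + ?m). \<Sum>y1\<in>tidx n. \<Sum>y2\<in>tidx ?m. f (take n xs) (drop n xs) y1 y2)"
    by (rule sum.cong[OF refl]) (rule sum_tidx_add)
  also have "\<dots> = (\<Sum>x1\<in>tidx n. \<Sum>x2\<in>tidx ?m. \<Sum>y1\<in>tidx n. \<Sum>y2\<in>tidx ?m. f x1 x2 y1 y2)"
    by (rule sum_tidx_add)
  also have "\<dots> = trace_on (tidx n) (op_mult (tidx n) A A') * trace_on (tidx ?m) (op_mult (tidx ?m) B B')"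
    by (simp add: trace_on_def op_mult_def f_def sum_product)
  finally show ?thesis .
qed

lemma no_unitary_discarding_copies:
  fixes e0 :: "'d::finite \<Rightarrow> complex"
  assumes dim: "card (UNIV :: 'd set) \<ge> 2" and nk: "n < k" and e0: "unit_vec UNIV e0"
  shows "\<not> (\<exists>U. unitary_on (tidx k) U \<and>
            (\<forall>\<psi> :: 'd \<Rightarrow> complex. unit_vec UNIV \<psi> \<longrightarrow>
               ops_eq_on (tidx k) (conj_op (tidx k) U (op_tpow (outer \<psi> \<psi>)))
                 (op_tensor n (op_tpow (outer \<psi> \<psi>)) (op_tpow (outer e0 e0)))))"
    (is "\<not> (\<exists>U. unitary_on (tidx k) U \<and> ?copies_to_pure U)")
proof
  assume "\<exists>U. unitary_on (tidx k) U \<and> ?copies_to_pure U"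
  then obtain U where U: "unitary_on (tidx k) U" and maps: "?copies_to_pure U" by blast
  obtain a b :: 'd where ab: "a \<noteq> b" using obtain_two_distinct[OF dim] .
  define \<psi> where "\<psi> = basis_vec a"
  define \<phi> where "\<phi> = (\<lambda>x::'d. if x = a then 3/5 else if x = b then 4/5 else (0::complex))"
  have "unit_vec UNIV \<phi>"
    unfolding unit_vec_def inner_on_def
    by (subst sum_UNIV_two_support[OF ab]) (auto simp: \<phi>_def ab ab[symmetric])
  then have units: "unit_vec UNIV \<psi>" "unit_vec UNIV \<phi>"
    unfolding \<psi>_def by (simp_all add: unit_vec_basis_vec)
  have overlap: "inner_on UNIV \<phi> \<psi> * inner_on UNIV \<psi> \<phi> = 9/25"
    by (simp add: \<psi>_def inner_on_basis_vec_left inner_on_basis_vec_right \<phi>_def)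
  have e0_norm: "inner_on UNIV e0 e0 * inner_on UNIV e0 e0 = 1"
    using e0 by (simp add: unit_vec_def)
  let ?I = "tidx k :: 'd list set"
  let ?trace = "trace_on ?I (op_mult ?I (conj_op ?I U (op_tpow (outer \<psi> \<psi>)))
                                        (conj_op ?I U (op_tpow (outer \<phi> \<phi>))))"
  have "?trace = trace_on ?I (op_mult ?I (op_tpow (outer \<psi> \<psi>)) (op_tpow (outer \<phi> \<phi>)))"
    by (simp add: op_mult_conj_op trace_conj_op finite_tidx U)
  also have "\<dots> = (9/25) ^ k"
    by (simp add: trace_op_tpow_outer_mult overlap)
  finally have "?trace = (9/25) ^ k" .
  moreover have "?trace = trace_on ?I (op_mult ?I
      (op_tensor n (op_tpow (outer \<psi> \<psi>)) (op_tpow (outer e0 e0)))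
      (op_tensor n (op_tpow (outer \<phi> \<phi>)) (op_tpow (outer e0 e0))))"
    using maps units
    by (intro trace_op_mult_cong) (auto simp: ops_eq_on_def)
  moreover have "\<dots> = (9/25) ^ n"
    using nk by (simp add: trace_op_tensor_mult trace_op_tpow_outer_mult overlap e0_norm)
  ultimately have "complex_of_real ((9/25) ^ k) = complex_of_real ((9/25) ^ n)" by simp
  then have "(9/25 :: real) ^ k = (9/25) ^ n" by (simp only: of_real_eq_iff)
  moreover have "(9/25 :: real) ^ k < (9/25) ^ n"
    using nk by (intro power_strict_decreasing) auto
  ultimately show False by simp
qed

theorem theorem2:
  fixes k n :: nat and \<alpha> \<beta> :: complex
    and \<Phi> :: "'d::finite list \<Rightarrow> complex"
  assumes dim: "card (UNIV :: 'd set) \<ge> 2"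
    and k: "k > 0" and n: "n > 0"
    and ab: "(cmod \<alpha>)\<^sup>2 + (cmod \<beta>)\<^sup>2 = 1" and b1: "cmod \<beta> \<noteq> 1"
    and Phi: "unit_vec (tidx n) \<Phi>"
  shows
   "(0 < cmod \<beta> \<and> cmod \<beta> < 1 \<longrightarrow>
      \<not> (\<exists>F. prob_transformation (tidx k) (tidx n) F \<and>
            (\<forall>\<psi> :: 'd \<Rightarrow> complex. unit_vec UNIV \<psi> \<longrightarrow>
               (let \<chi> = (\<lambda>xs. \<alpha> * vec_tpow \<psi> xs + \<beta> * \<Phi> xs) in
                inner_on (tidx n) \<chi> \<chi> \<noteq> 0 \<longrightarrow>
                (\<exists>p::real. p > 0 \<and>
                   ops_eq_on (tidx n) (lin_map (tidx k) F (op_tpow (outer \<psi> \<psi>)))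
                     (\<lambda>i j. of_real p * proj_norm (tidx n) \<chi> i j))))))
    \<and> (\<beta> = 0 \<and> n > k \<longrightarrow>
      \<not> (\<exists>F. prob_transformation (tidx k) (tidx n) F \<and>
            (\<forall>\<psi> :: 'd \<Rightarrow> complex. unit_vec UNIV \<psi> \<longrightarrow>
                (\<exists>p::real. p > 0 \<and>
                   ops_eq_on (tidx n) (lin_map (tidx k) F (op_tpow (outer \<psi> \<psi>)))
                     (\<lambda>i j. of_real p * op_tpow (outer \<psi> \<psi>) i j)))))
    \<and> (\<beta> = 0 \<and> n < k \<longrightarrow>
      (\<forall>e0 :: 'd \<Rightarrow> complex. unit_vec UNIV e0 \<longrightarrow>
        \<not> (\<exists>U. unitary_on (tidx k) U \<and>
            (\<forall>\<psi> :: 'd \<Rightarrow> complex. unit_vec UNIV \<psi> \<longrightarrow>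
               ops_eq_on (tidx k) (conj_op (tidx k) U (op_tpow (outer \<psi> \<psi>)))
                 (op_tensor n (op_tpow (outer \<psi> \<psi>)) (op_tpow (outer e0 e0)))))))"
proof (intro conjI impI)
  assume "0 < cmod \<beta> \<and> cmod \<beta> < 1"
  moreover have "\<alpha> \<noteq> 0" using ab b1 by (auto simp: abs_square_eq_1)
  ultimately show "\<not> (\<exists>F. prob_transformation (tidx k) (tidx n) F \<and>
            (\<forall>\<psi> :: 'd \<Rightarrow> complex. unit_vec UNIV \<psi> \<longrightarrow>
               (let \<chi> = (\<lambda>xs. \<alpha> * vec_tpow \<psi> xs + \<beta> * \<Phi> xs) in
                inner_on (tidx n) \<chi> \<chi> \<noteq> 0 \<longrightarrow>
                (\<exists>p::real. p > 0 \<and>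
                   ops_eq_on (tidx n) (lin_map (tidx k) F (op_tpow (outer \<psi> \<psi>)))
                     (\<lambda>i j. of_real p * proj_norm (tidx n) \<chi> i j)))))"
    using no_map_to_phase_sensitive_superposition[OF dim n Phi] by force
qed (use no_map_to_more_copies[OF dim] no_unitary_discarding_copies[OF dim] in blast)+

end
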